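(* Let $K$ be a field, and let $R \in \mathfrak R_K$ be of countable type. Then $R$ has a conormed multiplicative basis.
   Context: Socle sequence of a ring $R$: $S_0 = 0$, $S_{\alpha+1}/S_\alpha = \mathrm{Soc}(R/S_\alpha)$, $S_\alpha = \bigcup_{\beta<\alpha}S_\beta$ for limit $\alpha$; $R$ is semiartinian if $S_\tau = R$ for some $\tau$, the least such $\tau$ (of the form $\sigma+1$) being the Loewy length; layers $L_\alpha = S_{\alpha+1}/S_\alpha$. $K^{(\lambda)}$ is the direct sum of $\lambda$ copies of $K$ as a $K$-algebra without unit. $\mathfrak R_K$ is the class of commutative von Neumann regular semiartinian $K$-algebras $R$ of Loewy length $\sigma+1$ such that for each $\alpha\le\sigma$ there is a cardinal $\lambda_\alpha>0$ and a $K$-linear isomorphism of $K$-algebras without unit $L_\alpha\cong K^{(\lambda_\alpha)}$. $R$ is of countable type if $\sigma$ and all $\lambda_\alpha$ are countable. A $K$-basis $B$ of a $K$-algebra $R$ is multiplicative if for all $b,b'\in B$ either $bb'=0$ or $bb'\in B$. A $K$-basis $B$ of a semiartinian $K$-algebra $R$ of Loewy length $\sigma+1$ is conormed if $B$ contains a $K$-basis of $S_\alpha$ for each $\alpha\le\sigma$. *)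

theory Defs
  imports Complex_Main "HOL-Library.Countable_Set"
begin

text \<open>The ring R is modelled as a type 'r of class comm_ring_1 (commutative, unital),
  the field K as a type 'k of class field, and the K-algebra structure by a
  scalar multiplication scale making 'r a K-vector space compatible with products.\<close>

definition is_K_algebra :: "('k::field \<Rightarrow> 'r::comm_ring_1 \<Rightarrow> 'r) \<Rightarrow> bool" where
  "is_K_algebra scale \<longleftrightarrow> vector_space scale \<and>
     (\<forall>a x y. scale a (x * y) = scale a x * y)"

definition is_ideal :: "'r::comm_ring_1 set \<Rightarrow> bool" where
  "is_ideal J \<longleftrightarrow> 0 \<in> J \<and> (\<forall>x\<in>J. \<forall>y\<in>J. x + y \<in> J) \<and> (\<forall>r. \<forall>x\<in>J. r * x \<in> J)"

text \<open>J is minimal over I: J/I is a simple (i.e. minimal nonzero) submodule of R/I.\<close>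
definition minimal_over :: "'r::comm_ring_1 set \<Rightarrow> 'r set \<Rightarrow> bool" where
  "minimal_over I J \<longleftrightarrow> is_ideal J \<and> I \<subset> J \<and>
     (\<forall>M. is_ideal M \<and> I \<subseteq> M \<and> M \<subseteq> J \<longrightarrow> M = I \<or> M = J)"

text \<open>Preimage in R of Soc(R/I): the sum of I and all ideals minimal over I,
  i.e. the smallest ideal containing them.\<close>
definition soc_succ :: "'r::comm_ring_1 set \<Rightarrow> 'r set" where
  "soc_succ I = \<Inter>{J. is_ideal J \<and> I \<subseteq> J \<and> (\<forall>M. minimal_over I M \<longrightarrow> M \<subseteq> J)}"

text \<open>The members of the socle sequence (S_alpha): the smallest family containing 0 and
  closed under the successor step and under unions of nonempty chains.\<close>
inductive_set socle_seq :: "'r::comm_ring_1 set set" where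
  zero: "{0} \<in> socle_seq"
| succ: "I \<in> socle_seq \<Longrightarrow> soc_succ I \<in> socle_seq"
| lim: "(\<And>I. I \<in> C \<Longrightarrow> I \<in> socle_seq) \<Longrightarrow> C \<noteq> {} \<Longrightarrow> Complete_Partial_Order.chain (\<subseteq>) C
          \<Longrightarrow> \<Union>C \<in> socle_seq"

definition semiartinian :: "'r::comm_ring_1 itself \<Rightarrow> bool" where
  "semiartinian _ \<longleftrightarrow> (UNIV :: 'r set) \<in> socle_seq"

definition von_neumann_regular :: "'r::comm_ring_1 itself \<Rightarrow> bool" where
  "von_neumann_regular _ \<longleftrightarrow> (\<forall>x::'r. \<exists>y. x * y * x = x)"

text \<open>A K-linear isomorphism of K-algebras without unit J/I \<cong> K^(Lambda), where
  K^(Lambda) = finitely supported functions Lambda \<rightarrow> K with pointwise operations;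
  expressed by a map f on J that is additive, multiplicative, K-linear, onto K^(Lambda),
  with kernel exactly I.\<close>
definition layer_iso ::
  "('k::field \<Rightarrow> 'r::comm_ring_1 \<Rightarrow> 'r) \<Rightarrow> 'r set \<Rightarrow> 'r set \<Rightarrow> 'i set \<Rightarrow> ('r \<Rightarrow> 'i \<Rightarrow> 'k) \<Rightarrow> bool" where
  "layer_iso scale I J \<Lambda> f \<longleftrightarrow>
     (\<forall>x\<in>J. finite {i. f x i \<noteq> 0} \<and> {i. f x i \<noteq> 0} \<subseteq> \<Lambda>) \<and>
     (\<forall>x\<in>J. \<forall>y\<in>J. f (x + y) = (\<lambda>i. f x i + f y i)) \<and>
     (\<forall>x\<in>J. \<forall>y\<in>J. f (x * y) = (\<lambda>i. f x i * f y i)) \<and>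
     (\<forall>a. \<forall>x\<in>J. f (scale a x) = (\<lambda>i. a * f x i)) \<and>
     (\<forall>x\<in>J. f x = (\<lambda>i. 0) \<longleftrightarrow> x \<in> I) \<and>
     (\<forall>g. finite {i. g i \<noteq> 0} \<and> {i. g i \<noteq> 0} \<subseteq> \<Lambda> \<longrightarrow> (\<exists>x\<in>J. f x = g))"

text \<open>The layers are L = soc_succ I / I for the members I \<noteq> R of the socle sequence
  (these are exactly the layers L_alpha, alpha \<le> sigma). Cardinals lambda_alpha are
  represented by index sets of elements of R (any such lambda_alpha satisfies
  lambda_alpha \<le> |R|).\<close>
definition in_class_RK :: "('k::field \<Rightarrow> 'r::comm_ring_1 \<Rightarrow> 'r) \<Rightarrow> bool" where
  "in_class_RK scale \<longleftrightarrow> is_K_algebra scale \<and>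
     von_neumann_regular TYPE('r) \<and> semiartinian TYPE('r) \<and>
     (\<forall>I\<in>socle_seq. I \<noteq> UNIV \<longrightarrow>
        (\<exists>(\<Lambda>::'r set) f. \<Lambda> \<noteq> {} \<and> layer_iso scale I (soc_succ I) \<Lambda> f))"

text \<open>Countable type: the Loewy length (equivalently the set of members of the socle
  sequence) is countable and every lambda_alpha is countable.\<close>
definition countable_type :: "('k::field \<Rightarrow> 'r::comm_ring_1 \<Rightarrow> 'r) \<Rightarrow> bool" where
  "countable_type scale \<longleftrightarrow> countable (socle_seq :: 'r set set) \<and>
     (\<forall>I\<in>socle_seq. I \<noteq> UNIV \<longrightarrow>
        (\<exists>(\<Lambda>::'r set) f. \<Lambda> \<noteq> {} \<and> countable \<Lambda> \<and> layer_iso scale I (soc_succ I) \<Lambda> f))"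

definition is_K_basis :: "('k::field \<Rightarrow> 'r::comm_ring_1 \<Rightarrow> 'r) \<Rightarrow> 'r set \<Rightarrow> 'r set \<Rightarrow> bool" where
  "is_K_basis scale B V \<longleftrightarrow> B \<subseteq> V \<and> \<not> module.dependent scale B \<and> module.span scale B = V"

definition multiplicative_basis :: "('k::field \<Rightarrow> 'r::comm_ring_1 \<Rightarrow> 'r) \<Rightarrow> 'r set \<Rightarrow> bool" where
  "multiplicative_basis scale B \<longleftrightarrow> is_K_basis scale B UNIV \<and>
     (\<forall>b\<in>B. \<forall>b'\<in>B. b * b' = 0 \<or> b * b' \<in> B)"

definition conormed_basis :: "('k::field \<Rightarrow> 'r::comm_ring_1 \<Rightarrow> 'r) \<Rightarrow> 'r set \<Rightarrow> bool" where
  "conormed_basis scale B \<longleftrightarrow> is_K_basis scale B UNIV \<and>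
     (\<forall>S\<in>socle_seq. \<exists>C\<subseteq>B. is_K_basis scale C S)"

end

theory Submission
  imports Defs "HOL-Library.Bourbaki_Witt_Fixpoint" "HOL-Library.Sublist"
begin

text \<open>Since R is von Neumann regular, the unit vectors of each layer
  \<open>L\<^sub>\<alpha> \<cong> K\<^bsup>(\<lambda>\<^sub>\<alpha>)\<^esup>\<close> lift to idempotents of \<open>S\<^sub>\<alpha>\<^sub>+\<^sub>1\<close>, and by
  induction along the socle sequence countably many idempotents \<open>g\<^sub>0, g\<^sub>1, \<dots>\<close> span R.
  The atoms, i.e. the products of \<open>g\<^sub>j\<close> or \<open>1 - g\<^sub>j\<close> over \<open>j < n\<close>, form a binary tree of
  idempotents in which every node is the sum of its two children. Keep the root 1 and, at
  every node with two nonzero children, only the child lying in every \<open>S\<^sub>\<alpha>\<close> that contains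
  its sibling (such a child exists because the \<open>S\<^sub>\<alpha>\<close> form a chain). The product of two
  atoms is the lower one in the tree or 0, so these kept atoms form a multiplicative basis.
  An element of \<open>S\<^sub>\<alpha>\<close> is a combination of the atoms of one level lying in \<open>S\<^sub>\<alpha>\<close>, and a
  dropped child in \<open>S\<^sub>\<alpha>\<close> is its parent minus its kept sibling, both again in \<open>S\<^sub>\<alpha>\<close>; hence
  \<open>S\<^sub>\<alpha>\<close> is spanned by the basis elements it contains.\<close>

lemma is_ideal_mult_right: "is_ideal J \<Longrightarrow> x \<in> J \<Longrightarrow> x * y \<in> J"
  unfolding is_ideal_def by (metis mult.commute)

lemma is_ideal_diff: "is_ideal J \<Longrightarrow> x \<in> J \<Longrightarrow> y \<in> J \<Longrightarrow> x - y \<in> J"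
  unfolding is_ideal_def by (metis diff_conv_add_uminus mult_minus1)

lemma is_ideal_Union_chain:
  assumes "\<And>J. J \<in> C \<Longrightarrow> is_ideal J" "C \<noteq> {}" "Complete_Partial_Order.chain (\<subseteq>) C"
  shows "is_ideal (\<Union>C)"
  unfolding is_ideal_def
proof (intro conjI ballI allI)
  show "0 \<in> \<Union>C" using assms(1,2) by (auto simp: is_ideal_def)
next
  fix x y assume "x \<in> \<Union>C" "y \<in> \<Union>C"
  then obtain J J' where "J \<in> C" "J' \<in> C" "x \<in> J" "y \<in> J'" by auto
  moreover have "J \<subseteq> J' \<or> J' \<subseteq> J" using chainD[OF assms(3) \<open>J \<in> C\<close> \<open>J' \<in> C\<close>] .
  ultimately show "x + y \<in> \<Union>C" using assms(1) unfolding is_ideal_def by blast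
next
  fix r x assume "x \<in> \<Union>C"
  then show "r * x \<in> \<Union>C" using assms(1) unfolding is_ideal_def by blast
qed

lemma socle_seq_is_ideal: "S \<in> socle_seq \<Longrightarrow> is_ideal S"
proof (induction rule: socle_seq.induct)
  case zero
  then show ?case by (simp add: is_ideal_def)
next
  case (succ I)
  show ?case unfolding soc_succ_def is_ideal_def by auto
next
  case (lim C)
  then show ?case by (simp add: is_ideal_Union_chain)
qed

text \<open>The members of the socle sequence are iterates of the inflationary map soc_succ
  above 0, and these form a chain by the Bourbaki-Witt theorem.\<close>

lemma socle_seq_linear:
  assumes "A \<in> (socle_seq :: 'r::comm_ring_1 set set)" "B \<in> socle_seq"
  shows "A \<subseteq> B \<or> B \<subseteq> A"
proof -
  interpret bw: bourbaki_witt_fixpoint Sup "{(x::'r set, y). x \<le> y}" soc_succ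
    by (rule bourbaki_witt_fixpoint_complete_latticeI) (auto simp: soc_succ_def)
  have iterate: "S \<in> bw.iterates_above {0}" if "S \<in> socle_seq" for S
    using that
  proof (induction rule: socle_seq.induct)
    case zero
    then show ?case by (rule bw.iterates_above.base)
  next
    case (succ I)
    then show ?case by (simp add: bw.iterates_above.step)
  next
    case (lim C)
    then have "C \<in> Chains {(x::'r set, y). x \<le> y}"
      by (simp add: in_Chains_conv_chain)
    then show ?case using lim bw.iterates_above.Sup[of C "{0}"] by simp
  qed
  have "bw.iterates_above {0} \<in> Chains {(x::'r set, y). x \<le> y}"
    by (rule bw.chain_iterates_above) (auto simp: Field_def)
  then show ?thesis using iterate assms by (auto dest: in_ChainsD)
qed

locale K_algebra = vector_space scale for scale :: "'k::field \<Rightarrow> 'r::comm_ring_1 \<Rightarrow> 'r" +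
  assumes scale_mult: "scale a (x * y) = scale a x * y"
begin

lemma mult_scale: "x * scale a y = scale a (x * y)"
  by (metis scale_mult mult.commute)

lemma is_ideal_scale: "is_ideal J \<Longrightarrow> x \<in> J \<Longrightarrow> scale a x \<in> J"
  by (metis is_ideal_def mult_1 scale_mult)

lemma is_ideal_subspace: "is_ideal J \<Longrightarrow> subspace J"
  unfolding subspace_def using is_ideal_scale by (auto simp: is_ideal_def)

lemma sum_scale_mult_if:
  assumes "finite W" "\<And>v. v \<in> W \<Longrightarrow> x v * a = (if v \<in> P then a else 0)"
  shows "(\<Sum>v\<in>W. scale (c v) (x v)) * a = scale (\<Sum>v\<in>W \<inter> P. c v) a"
proof -
  have "(\<Sum>v\<in>W. scale (c v) (x v)) * a = (\<Sum>v\<in>W. if v \<in> P then scale (c v) a else 0)"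
    using assms(2) by (auto simp: sum_distrib_right scale_mult[symmetric] intro!: sum.cong)
  also have "\<dots> = (\<Sum>v\<in>W \<inter> P. scale (c v) a)"
    using assms(1) by (simp add: sum.inter_restrict)
  finally show ?thesis by (simp add: scale_sum_left)
qed

lemma span_orthogonal_idempotents_inter_ideal:
  assumes A: "finite A" "\<And>a. a \<in> A \<Longrightarrow> a * a = a"
    "\<And>a b. a \<in> A \<Longrightarrow> b \<in> A \<Longrightarrow> a \<noteq> b \<Longrightarrow> a * b = 0"
    and J: "is_ideal J" and x: "x \<in> span A" "x \<in> J"
  shows "x \<in> span (A \<inter> J)"
proof -
  obtain c where c: "x = (\<Sum>v\<in>A. scale (c v) v)"
    using x span_finite[OF A(1)] by auto
  have "scale (c a) a \<in> J" if "a \<in> A" for a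
  proof -
    have "x * a = scale (c a) a"
      unfolding c using A that by (subst sum_scale_mult_if[where P = "{a}"]) auto
    then show ?thesis using is_ideal_mult_right[OF J x(2)] by metis
  qed
  then have "scale (c a) a \<in> span (A \<inter> J)" if "a \<in> A" for a
    using that is_ideal_scale[OF J, of "scale (c a) a" "inverse (c a)"]
    by (cases "c a = 0") (auto intro: span_base span_scale span_zero)
  then show ?thesis unfolding c by (intro span_sum)
qed

lemma layer_isoD:
  assumes "layer_iso scale I J \<Lambda> f"
  shows layer_iso_support: "\<And>x. x \<in> J \<Longrightarrow> finite {i. f x i \<noteq> 0} \<and> {i. f x i \<noteq> 0} \<subseteq> \<Lambda>"
    and layer_iso_add: "\<And>x y. x \<in> J \<Longrightarrow> y \<in> J \<Longrightarrow> f (x + y) = (\<lambda>i. f x i + f y i)"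
    and layer_iso_mult: "\<And>x y. x \<in> J \<Longrightarrow> y \<in> J \<Longrightarrow> f (x * y) = (\<lambda>i. f x i * f y i)"
    and layer_iso_scale: "\<And>a x. x \<in> J \<Longrightarrow> f (scale a x) = (\<lambda>i. a * f x i)"
    and layer_iso_kernel: "\<And>x. x \<in> J \<Longrightarrow> f x = (\<lambda>i. 0) \<longleftrightarrow> x \<in> I"
    and layer_iso_surj:
      "\<And>g. finite {i. g i \<noteq> 0} \<Longrightarrow> {i. g i \<noteq> 0} \<subseteq> \<Lambda> \<Longrightarrow> \<exists>x\<in>J. f x = g"
  using assms unfolding layer_iso_def by simp_all

lemma layer_iso_sum:
  assumes f: "layer_iso scale I J \<Lambda> f" and J: "is_ideal J"
    and T: "finite T" "\<And>t. t \<in> T \<Longrightarrow> x t \<in> J"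
  shows "(\<Sum>t\<in>T. x t) \<in> J \<and> f (\<Sum>t\<in>T. x t) = (\<lambda>i. \<Sum>t\<in>T. f (x t) i)"
  using T
proof (induction T rule: finite_induct)
  case empty
  have "0 \<in> J" using J by (simp add: is_ideal_def)
  then have "f (0 + 0) = (\<lambda>i. f 0 i + f 0 i)" using layer_iso_add[OF f] by blast
  then have "f 0 = (\<lambda>i. 0)" by (metis add_0 add_cancel_right_right)
  then show ?case using \<open>0 \<in> J\<close> by simp
next
  case (insert t T)
  then show ?case using J layer_iso_add[OF f] by (simp add: is_ideal_def)
qed

lemma layer_iso_eq_imp_diff:
  assumes f: "layer_iso scale I J \<Lambda> f" and J: "is_ideal J"
    and x: "x \<in> J" "y \<in> J" "f x = f y"
  shows "x - y \<in> I"
proof -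
  have xy: "x - y \<in> J" using is_ideal_diff[OF J] x by blast
  have "f (y + (x - y)) = (\<lambda>i. f y i + f (x - y) i)"
    using layer_iso_add[OF f] xy x by blast
  then have "f (x - y) = (\<lambda>i. 0)" using x(3) by (simp add: fun_eq_iff)
  then show ?thesis using layer_iso_kernel[OF f] xy by blast
qed

text \<open>If \<open>x * y * x = x\<close>, then \<open>e = x * y\<close> is an idempotent with \<open>x * e = x\<close> and
  \<open>e = x * (e * y)\<close>, so multiplicativity of \<open>f\<close> forces \<open>f e = f x\<close>.\<close>

lemma layer_iso_lift_unit_vector:
  assumes f: "layer_iso scale I J \<Lambda> f" and J: "is_ideal J"
    and vnr: "von_neumann_regular TYPE('r)" and i: "i \<in> \<Lambda>"
  shows "\<exists>e. e * e = e \<and> e \<in> J \<and> f e = (\<lambda>j. if j = i then 1 else 0)"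
proof -
  have "{j. (if j = i then 1 else 0) \<noteq> (0::'k)} = {i}" by auto
  then obtain x where x: "x \<in> J" "f x = (\<lambda>j. if j = i then 1 else 0)"
    using layer_iso_surj[OF f, of "\<lambda>j. if j = i then 1 else 0"] i by auto
  obtain y where y: "x * y * x = x" using vnr by (auto simp: von_neumann_regular_def)
  define e where "e = x * y"
  have ee: "e * e = e" using y by (metis e_def mult.assoc)
  have eJ: "e \<in> J" and eyJ: "e * y \<in> J"
    using J x(1) by (simp_all add: e_def is_ideal_mult_right)
  have "f x = f (x * e)" using y by (simp add: e_def ac_simps)
  also have "\<dots> = (\<lambda>j. f x j * f e j)" using layer_iso_mult[OF f] x(1) eJ by blast
  finally have "f e i = 1" using x(2) by (metis mult_1)
  moreover have "x * (e * y) = (x * y * x) * y" by (simp add: e_def ac_simps)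
  then have "f e = f (x * (e * y))" using y by (simp add: e_def)
  then have "f e = (\<lambda>j. f x j * f (e * y) j)" using layer_iso_mult[OF f] x(1) eyJ by simp
  ultimately have "f e = (\<lambda>j. if j = i then 1 else 0)" using x(2) by (auto simp: fun_eq_iff)
  then show ?thesis using ee eJ by blast
qed

lemma layer_iso_span_lifts:
  assumes f: "layer_iso scale I J \<Lambda> f" and J: "is_ideal J"
    and e: "\<And>i. i \<in> \<Lambda> \<Longrightarrow> e i \<in> J \<and> f (e i) = (\<lambda>j. if j = i then 1 else 0)"
  shows "J \<subseteq> span (e ` \<Lambda> \<union> I)"
proof
  fix x assume x: "x \<in> J"
  define T where "T = {i. f x i \<noteq> 0}"
  have T: "finite T" "T \<subseteq> \<Lambda>" using layer_iso_support[OF f x] by (auto simp: T_def)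
  define z where "z = (\<Sum>i\<in>T. scale (f x i) (e i))"
  have "z \<in> J \<and> f z = (\<lambda>j. \<Sum>i\<in>T. f (scale (f x i) (e i)) j)"
    unfolding z_def using T e is_ideal_scale[OF J] by (intro layer_iso_sum[OF f J]) auto
  moreover have "(\<Sum>i\<in>T. f (scale (f x i) (e i)) j) = f x j" for j
  proof -
    have "(\<Sum>i\<in>T. f (scale (f x i) (e i)) j) = (\<Sum>i\<in>T. if i = j then f x i else 0)"
      using T e layer_iso_scale[OF f] by (intro sum.cong) auto
    also have "\<dots> = f x j" using T(1) by (simp add: T_def)
    finally show ?thesis .
  qed
  ultimately have "z \<in> J" "f x = f z" by auto
  then have "x - z \<in> span (e ` \<Lambda> \<union> I)"
    using layer_iso_eq_imp_diff[OF f J x] by (auto intro: span_base)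
  moreover have "z \<in> span (e ` \<Lambda> \<union> I)"
    unfolding z_def using T by (intro span_sum span_scale span_base) auto
  ultimately show "x \<in> span (e ` \<Lambda> \<union> I)" by (metis span_add diff_add_cancel)
qed

lemma layer_spanned_by_idempotents:
  assumes f: "layer_iso scale I J \<Lambda> f" and J: "is_ideal J"
    and vnr: "von_neumann_regular TYPE('r)"
  shows "\<exists>e. (\<forall>i\<in>\<Lambda>. e i * e i = e i) \<and> J \<subseteq> span (e ` \<Lambda> \<union> I)"
proof -
  have "\<forall>i\<in>\<Lambda>. \<exists>e. e * e = e \<and> e \<in> J \<and> f e = (\<lambda>j. if j = i then 1 else 0)"
    using layer_iso_lift_unit_vector[OF f J vnr] by blast
  then obtain e where "\<forall>i\<in>\<Lambda>. e i * e i = e i \<and> e i \<in> J \<and> f (e i) = (\<lambda>j. if j = i then 1 else 0)"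
    by (metis bchoice)
  then show ?thesis using layer_iso_span_lifts[OF f J] by blast
qed

lemma socle_seq_spanned_by_idempotents:
  assumes vnr: "von_neumann_regular TYPE('r)" and ct: "countable_type scale"
  shows "\<exists>G. countable G \<and> (\<forall>x\<in>G. x * x = x) \<and> (\<forall>S\<in>socle_seq. S \<subseteq> span G)"
proof -
  have "\<exists>E. countable E \<and> (\<forall>x\<in>E. x * x = x) \<and> soc_succ I \<subseteq> span (E \<union> I)"
    if I: "I \<in> socle_seq" "I \<noteq> UNIV" for I
  proof -
    obtain \<Lambda> :: "'r set" and f where \<Lambda>: "countable \<Lambda>" and f: "layer_iso scale I (soc_succ I) \<Lambda> f"
      using ct I unfolding countable_type_def by blast
    have "is_ideal (soc_succ I)" using I by (blast intro: socle_seq_is_ideal socle_seq.succ)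
    then obtain e where "\<forall>i\<in>\<Lambda>. e i * e i = e i" "soc_succ I \<subseteq> span (e ` \<Lambda> \<union> I)"
      using layer_spanned_by_idempotents[OF f _ vnr] by blast
    then show ?thesis using \<Lambda> by (intro exI[of _ "e ` \<Lambda>"]) auto
  qed
  then obtain E where E: "\<And>I. I \<in> socle_seq \<Longrightarrow> I \<noteq> UNIV \<Longrightarrow>
      countable (E I) \<and> (\<forall>x\<in>E I. x * x = x) \<and> soc_succ I \<subseteq> span (E I \<union> I)"
    by metis
  define G where "G = (\<Union>I\<in>socle_seq - {UNIV}. E I)"
  have "S \<subseteq> span G" if "S \<in> socle_seq" for S
    using that
  proof (induction rule: socle_seq.induct)
    case zero
    then show ?case by (simp add: span_zero)
  next
    case (succ I)
    show ?case
    proof (cases "I = UNIV")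
      case True
      then show ?thesis using succ.IH by blast
    next
      case False
      then have "E I \<union> I \<subseteq> span G"
        using succ by (auto simp: G_def intro: span_base)
      then have "span (E I \<union> I) \<subseteq> span G" by (simp add: span_minimal)
      then show ?thesis using E[of I] succ.hyps False by blast
    qed
  next
    case (lim C)
    then show ?case by blast
  qed
  moreover have "countable G" "\<forall>x\<in>G. x * x = x"
    using E assms(2) by (auto simp: G_def countable_type_def)
  ultimately show ?thesis by blast
qed

end

locale idempotent_sequence = K_algebra scale for scale :: "'k::field \<Rightarrow> 'r::comm_ring_1 \<Rightarrow> 'r" +
  fixes g :: "nat \<Rightarrow> 'r"
  assumes g_idem: "g n * g n = g n"
    and span_range_g: "span (range g) = UNIV"
begin

definition literal :: "nat \<Rightarrow> bool \<Rightarrow> 'r" where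
  "literal j x = (if x then g j else 1 - g j)"

definition atom :: "bool list \<Rightarrow> 'r" where
  "atom w = (\<Prod>j<length w. literal j (w ! j))"

definition atoms :: "nat \<Rightarrow> 'r set" where
  "atoms n = atom ` {w. length w = n}"

lemma literal_idem: "literal j x * literal j x = literal j x"
  using g_idem[of j] by (auto simp: literal_def algebra_simps)

lemma literal_orthogonal: "x \<noteq> y \<Longrightarrow> literal j x * literal j y = 0"
  using g_idem[of j] by (cases x; cases y) (auto simp: literal_def algebra_simps)

lemma atom_Nil [simp]: "atom [] = 1"
  by (simp add: atom_def)

lemma atom_snoc: "atom (w @ [x]) = atom w * literal (length w) x"
  unfolding atom_def by (simp add: lessThan_Suc nth_append mult.commute)

lemma atom_snoc_add: "atom (w @ [x]) + atom (w @ [\<not> x]) = atom w"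
  by (cases x) (simp_all add: atom_snoc literal_def algebra_simps)

lemma atom_idem: "atom w * atom w = atom w"
proof (induction w rule: rev_induct)
  case (snoc x w)
  then show ?case
    using literal_idem[of "length w" x] by (simp add: atom_snoc ac_simps) (metis mult.assoc)
qed simp

lemma atom_prefix: "prefix u v \<Longrightarrow> atom u * atom v = atom v"
proof (induction v rule: rev_induct)
  case (snoc x v)
  show ?case
  proof (cases "u = v @ [x]")
    case True
    then show ?thesis by (simp only: atom_idem)
  next
    case False
    then have "prefix u v" using snoc.prems by simp
    then show ?thesis using snoc.IH by (simp add: atom_snoc mult.assoc[symmetric])
  qed
qed simp

lemma atom_parallel:
  assumes "u \<parallel> v"
  shows "atom u * atom v = 0"
proof -
  obtain p b bs c cs where "b \<noteq> c" and uv: "u = p @ b # bs" "v = p @ c # cs"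
    using parallel_decomp[OF assms] by blast
  then have "atom (p @ [b]) * atom (p @ [c]) = 0"
    by (simp add: atom_snoc literal_orthogonal mult.assoc mult.left_commute[of _ "atom p"])
  moreover have "atom u = atom (p @ [b]) * atom u" "atom v = atom (p @ [c]) * atom v"
    using uv by (simp_all add: atom_prefix)
  ultimately show ?thesis by (metis mult.assoc mult.left_commute mult_zero_left)
qed

lemma atom_mult_longer:
  assumes "length u \<le> length v"
  shows "atom u * atom v = (if prefix u v then atom v else 0)"
proof (cases "prefix u v")
  case False
  then have "u \<parallel> v" using assms by (metis parallelI prefix_length_le prefix_length_prefix prefix_order.refl)
  then show ?thesis using False by (simp add: atom_parallel)
qed (simp add: atom_prefix)

lemma finite_atoms: "finite (atoms n)"
  unfolding atoms_def using finite_lists_length_eq[of "UNIV :: bool set" n] by simp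

lemma atoms_idem: "a \<in> atoms n \<Longrightarrow> a * a = a"
  by (auto simp: atoms_def atom_idem)

lemma atoms_orthogonal:
  assumes "a \<in> atoms n" "b \<in> atoms n" "a \<noteq> b"
  shows "a * b = 0"
proof -
  obtain u v where "length u = n" "length v = n" "a = atom u" "b = atom v"
    using assms(1,2) by (auto simp: atoms_def)
  then show ?thesis
    using assms(3) atom_mult_longer[of u v] by (auto simp: prefix_def)
qed

lemma atoms_subset_span_atoms_Suc: "atoms n \<subseteq> span (atoms (Suc n))"
proof
  fix a assume "a \<in> atoms n"
  then obtain w where w: "length w = n" "a = atom w" by (auto simp: atoms_def)
  then have "atom (w @ [True]) \<in> atoms (Suc n)" "atom (w @ [False]) \<in> atoms (Suc n)"
    by (auto simp: atoms_def)
  then have "atom (w @ [True]) + atom (w @ [False]) \<in> span (atoms (Suc n))"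
    by (intro span_add span_base)
  then show "a \<in> span (atoms (Suc n))" using atom_snoc_add[of w True] w by simp
qed

lemma span_atoms_mono: "m \<le> n \<Longrightarrow> span (atoms m) \<subseteq> span (atoms n)"
proof (induction n rule: dec_induct)
  case (step n)
  then show ?case
    using atoms_subset_span_atoms_Suc[of n] by (metis span_minimal subspace_span subset_trans)
qed simp

lemma g_mult_span_atoms: "y \<in> span (atoms n) \<Longrightarrow> g n * y \<in> span (atoms (Suc n))"
proof (induction rule: span_induct_alt)
  case base
  then show ?case by (simp add: span_zero)
next
  case (step c a y)
  then obtain w where w: "length w = n" "a = atom w" by (auto simp: atoms_def)
  then have "g n * a \<in> atoms (Suc n)"
    by (auto simp: atoms_def atom_snoc literal_def mult.commute intro!: image_eqI[of _ _ "w @ [True]"])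
  then have "scale c (g n * a) + g n * y \<in> span (atoms (Suc n))"
    using step by (blast intro: span_add span_scale span_base)
  then show ?case by (simp add: distrib_left mult_scale)
qed

lemma g_in_span_atoms: "g n \<in> span (atoms (Suc n))"
proof -
  have "1 \<in> span (atoms n)"
    using span_atoms_mono[of 0 n] by (auto simp: atoms_def intro: span_base)
  then show ?thesis using g_mult_span_atoms by fastforce
qed

lemma ex_span_atoms: "\<exists>n. x \<in> span (atoms n)"
proof -
  have "x \<in> span (range g)" using span_range_g by simp
  then show ?thesis
  proof (induction rule: span_induct_alt)
    case base
    then show ?case using span_zero by blast
  next
    case (step c x y)
    then obtain m n where "x = g m" "y \<in> span (atoms n)" by auto
    then have "x \<in> span (atoms (max (Suc m) n))" "y \<in> span (atoms (max (Suc m) n))"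
      using g_in_span_atoms[of m] span_atoms_mono[of "Suc m" "max (Suc m) n"]
        span_atoms_mono[of n "max (Suc m) n"]
      by auto
    then show ?case by (blast intro: span_add span_scale)
  qed
qed

end

locale idempotent_sequence_chain = idempotent_sequence scale g
  for scale :: "'k::field \<Rightarrow> 'r::comm_ring_1 \<Rightarrow> 'r" and g +
  fixes SS :: "'r set set"
  assumes chain_is_ideal: "S \<in> SS \<Longrightarrow> is_ideal S"
    and chain_linear: "S \<in> SS \<Longrightarrow> T \<in> SS \<Longrightarrow> S \<subseteq> T \<or> T \<subseteq> S"
    and UNIV_in_chain: "UNIV \<in> SS"
begin

definition splits :: "bool list \<Rightarrow> bool" where
  "splits w \<longleftrightarrow> atom (w @ [True]) \<noteq> 0 \<and> atom (w @ [False]) \<noteq> 0"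

definition branch :: "bool list \<Rightarrow> bool" where
  "branch w \<longleftrightarrow> (\<forall>S\<in>SS. atom (w @ [False]) \<in> S \<longrightarrow> atom (w @ [True]) \<in> S)"

definition basis_words :: "bool list set" where
  "basis_words = insert [] {w @ [branch w] | w. splits w}"

definition tree_basis :: "'r set" where
  "tree_basis = atom ` basis_words"

lemma branch_later:
  assumes "S \<in> SS" "atom (w @ [\<not> branch w]) \<in> S"
  shows "atom (w @ [branch w]) \<in> S"
proof (cases "branch w")
  case False
  then obtain T where "T \<in> SS" "atom (w @ [False]) \<in> T" "atom (w @ [True]) \<notin> T"
    unfolding branch_def by auto
  then show ?thesis using assms False chain_linear[OF assms(1), of T] by auto
qed (use assms in \<open>auto simp: branch_def\<close>)

lemma atom_in_span_tree_basis:
  assumes S: "S \<in> SS"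
  shows "atom w \<in> S \<Longrightarrow> atom w \<in> span (tree_basis \<inter> S)"
proof (induction w rule: rev_induct)
  case Nil
  then show ?case by (intro span_base) (auto simp: tree_basis_def basis_words_def)
next
  case (snoc x w)
  show ?case
  proof (cases "splits w")
    case True
    then have kept: "atom (w @ [branch w]) \<in> tree_basis"
      by (auto simp: tree_basis_def basis_words_def)
    show ?thesis
    proof (cases "x = branch w")
      case True
      then show ?thesis using kept snoc.prems by (auto intro: span_base)
    next
      case False
      then have x: "x = (\<not> branch w)" by auto
      then have "atom (w @ [branch w]) \<in> S" using branch_later[OF S] snoc.prems by simp
      moreover have "atom w = atom (w @ [x]) + atom (w @ [branch w])"
        using atom_snoc_add[of w x] x by (simp add: add.commute)
      ultimately have "atom w \<in> S" using snoc.prems chain_is_ideal[OF S]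
        by (simp add: is_ideal_def)
      then have "atom w - atom (w @ [branch w]) \<in> span (tree_basis \<inter> S)"
        using kept \<open>atom (w @ [branch w]) \<in> S\<close>
        by (intro span_diff snoc.IH span_base) auto
      then show ?thesis using \<open>atom w = _\<close> by simp
    qed
  next
    case False
    then have "atom (w @ [x]) = 0 \<or> atom (w @ [\<not> x]) = 0"
      unfolding splits_def by (cases x) auto
    then show ?thesis
    proof
      assume "atom (w @ [\<not> x]) = 0"
      then have "atom (w @ [x]) = atom w" using atom_snoc_add[of w x] by simp
      then show ?thesis using snoc by simp
    qed (simp add: span_zero)
  qed
qed

lemma chain_member_span_tree_basis: "S \<in> SS \<Longrightarrow> span (tree_basis \<inter> S) = S"
proof (rule span_subspace)
  assume S: "S \<in> SS"
  show "S \<subseteq> span (tree_basis \<inter> S)"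
  proof
    fix x assume "x \<in> S"
    obtain n where "x \<in> span (atoms n)" using ex_span_atoms by blast
    then have "x \<in> span (atoms n \<inter> S)"
      using finite_atoms atoms_idem atoms_orthogonal chain_is_ideal[OF S] \<open>x \<in> S\<close>
      by (intro span_orthogonal_idempotents_inter_ideal) auto
    moreover have "atoms n \<inter> S \<subseteq> span (tree_basis \<inter> S)"
      using atom_in_span_tree_basis[OF S] by (auto simp: atoms_def)
    ultimately show "x \<in> span (tree_basis \<inter> S)" by (metis span_minimal subspace_span subsetD)
  qed
  show "subspace S" using S by (simp add: chain_is_ideal is_ideal_subspace)
qed auto

lemma tree_basis_mult:
  "b \<in> tree_basis \<Longrightarrow> b' \<in> tree_basis \<Longrightarrow> b * b' = 0 \<or> b * b' \<in> tree_basis"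
proof -
  assume "b \<in> tree_basis" "b' \<in> tree_basis"
  then obtain u v where uv: "b = atom u" "b' = atom v" "u \<in> basis_words" "v \<in> basis_words"
    by (auto simp: tree_basis_def)
  have "atom u * atom v \<in> {0, atom u, atom v}"
    using atom_mult_longer[of u v] atom_mult_longer[of v u]
    by (cases "length u \<le> length v") (auto simp: mult.commute)
  then show ?thesis using uv by (auto simp: tree_basis_def)
qed

lemma snoc_not_branch_notin_basis_words: "w @ [\<not> branch w] \<notin> basis_words"
  by (auto simp: basis_words_def)

lemma splits_snoc_nonzero: "splits w \<Longrightarrow> atom (w @ [x]) \<noteq> 0"
  by (cases x) (simp_all add: splits_def)

text \<open>Multiplying a relation by the atom \<open>b\<close> of a longest word and by its dropped
  sibling \<open>d\<close> isolates the coefficient of \<open>b\<close>: the other words are not longer than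
  \<open>b\<close>, so their atoms act on \<open>b\<close> and on \<open>d\<close> alike, as identity or as zero, according
  to whether they are prefixes of the parent of \<open>b\<close>.\<close>

lemma coefficient_of_longest_basis_word:
  assumes W: "finite W" "W \<subseteq> basis_words"
    and b: "b \<in> W" "\<And>v. v \<in> W \<Longrightarrow> length v \<le> length b"
    and rel: "(\<Sum>v\<in>W. scale (c v) (atom v)) = 0"
  shows "c b = 0"
proof (cases "b = []")
  case True
  then have "W = {[]}" using b by auto
  then show ?thesis using rel True by simp
next
  case False
  then obtain w where bw: "b = w @ [branch w]" and "splits w"
    using W b by (auto simp: basis_words_def)
  define d where "d = atom (w @ [\<not> branch w])"
  have "atom b \<noteq> 0" "d \<noteq> 0"
    using splits_snoc_nonzero[OF \<open>splits w\<close>] by (simp_all add: bw d_def)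
  define P where "P = {v. prefix v w}"
  have "b \<notin> P" by (simp add: P_def bw prefix_def)
  have mult_d: "atom v * d = (if v \<in> P then d else 0)" if "v \<in> W" for v
  proof -
    have "v \<noteq> w @ [\<not> branch w]" using that W(2) snoc_not_branch_notin_basis_words by blast
    then show ?thesis
      using atom_mult_longer[of v "w @ [\<not> branch w]"] b(2)[OF that]
      by (simp add: bw d_def P_def)
  qed
  have "(\<Sum>v\<in>W. scale (c v) (atom v)) * d = scale (\<Sum>v\<in>W \<inter> P. c v) d"
    using W(1) mult_d by (rule sum_scale_mult_if)
  then have "scale (\<Sum>v\<in>W \<inter> P. c v) d = 0" using rel by simp
  then have P0: "(\<Sum>v\<in>W \<inter> P. c v) = 0" using \<open>d \<noteq> 0\<close> by simp
  have mult_b: "atom v * atom b = (if v \<in> insert b P then atom b else 0)" if "v \<in> W" for v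
    using atom_mult_longer[of v b] b(2)[OF that] by (simp add: bw P_def)
  have "(\<Sum>v\<in>W. scale (c v) (atom v)) * atom b = scale (\<Sum>v\<in>W \<inter> insert b P. c v) (atom b)"
    using W(1) mult_b by (rule sum_scale_mult_if)
  then have "scale (\<Sum>v\<in>W \<inter> insert b P. c v) (atom b) = 0" using rel by simp
  moreover have "W \<inter> insert b P = insert b (W \<inter> P)" using b(1) by auto
  ultimately show ?thesis
    using P0 W(1) \<open>b \<notin> P\<close> \<open>atom b \<noteq> 0\<close> by simp
qed

lemma basis_words_independent:
  assumes "finite W" "W \<subseteq> basis_words" "(\<Sum>v\<in>W. scale (c v) (atom v)) = 0"
  shows "\<forall>v\<in>W. c v = 0"
  using assms
proof (induction W rule: finite_remove_induct)
  case (remove A)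
  have "Max (length ` A) \<in> length ` A" using remove.hyps(1,2) by (intro Max_in) auto
  then obtain b where "b \<in> A" "length b = Max (length ` A)" by auto
  then have b: "b \<in> A" "\<And>v. v \<in> A \<Longrightarrow> length v \<le> length b"
    using remove.hyps(1) by auto
  have "c b = 0"
    using remove.hyps(1) remove.prems(1) b remove.prems(2) by (rule coefficient_of_longest_basis_word)
  then have "(\<Sum>v\<in>A - {b}. scale (c v) (atom v)) = 0"
    using remove.prems(2) sum.remove[OF remove.hyps(1) b(1), of "\<lambda>v. scale (c v) (atom v)"]
    by simp
  then show ?case using remove.IH[OF b(1)] remove.prems(1) \<open>c b = 0\<close> by blast
qed simp

lemma tree_basis_independent: "independent tree_basis"
  unfolding independent_explicit_module
proof (intro allI impI)
  fix T u b
  assume T: "finite T" "T \<subseteq> tree_basis" and rel: "(\<Sum>v\<in>T. scale (u v) v) = 0" and "b \<in> T"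
  obtain W where W: "W \<subseteq> basis_words" "inj_on atom W" "T = atom ` W"
    using T(2) unfolding tree_basis_def subset_image_inj by blast
  then have "finite W" using T(1) finite_image_iff by blast
  moreover have "(\<Sum>w\<in>W. scale (u (atom w)) (atom w)) = 0"
    using rel W by (simp add: sum.reindex)
  ultimately show "u b = 0"
    using basis_words_independent[OF _ W(1), of "\<lambda>w. u (atom w)"] W(3) \<open>b \<in> T\<close> by auto
qed

lemma tree_basis_K_basis: "is_K_basis scale tree_basis UNIV"
  using tree_basis_independent chain_member_span_tree_basis[OF UNIV_in_chain]
  by (simp add: is_K_basis_def)

lemma tree_basis_inter_chain_K_basis: "S \<in> SS \<Longrightarrow> is_K_basis scale (tree_basis \<inter> S) S"
  using tree_basis_independent chain_member_span_tree_basis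
  by (auto simp: is_K_basis_def dest: independent_mono)

end

theorem corollary7p4:
  fixes scale :: "'k::field \<Rightarrow> 'r::comm_ring_1 \<Rightarrow> 'r"
  assumes "in_class_RK scale"
    and "countable_type scale"
  shows "\<exists>B. conormed_basis scale B \<and> multiplicative_basis scale B"
proof -
  interpret K_algebra scale
    using assms(1) by (simp add: in_class_RK_def is_K_algebra_def K_algebra_def K_algebra_axioms_def)
  have vnr: "von_neumann_regular TYPE('r)" and top: "UNIV \<in> (socle_seq :: 'r set set)"
    using assms(1) by (simp_all add: in_class_RK_def semiartinian_def)
  obtain G where G: "countable G" "\<forall>x\<in>G. x * x = x" "\<forall>S\<in>socle_seq. S \<subseteq> span G"
    using socle_seq_spanned_by_idempotents[OF vnr assms(2)] by blast
  then have "span G = UNIV" using top by auto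
  then have "G \<noteq> {}" by (metis span_empty empty_iff insert_iff UNIV_I zero_neq_one)
  interpret idempotent_sequence_chain scale "from_nat_into G" socle_seq
  proof unfold_locales
    show "from_nat_into G n * from_nat_into G n = from_nat_into G n" for n
      using G(2) from_nat_into[OF \<open>G \<noteq> {}\<close>] by blast
    show "span (range (from_nat_into G)) = UNIV"
      using range_from_nat_into[OF \<open>G \<noteq> {}\<close> G(1)] \<open>span G = UNIV\<close> by simp
  qed (simp_all add: socle_seq_is_ideal socle_seq_linear top)
  show ?thesis
    using tree_basis_K_basis tree_basis_mult tree_basis_inter_chain_K_basis
    unfolding conormed_basis_def multiplicative_basis_def by blast
qed

end
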